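(* Let $m,n\ge 0$, $0\le k\le\min(m,n)$, and let $i,j$ be integers with $0\le i\le m$, $0\le j\le n$, $k\le i+j\le m+n-k$. Then $c_{m,n,k}(i,j)$ equals the coefficient of $x^jy^i$ in the power series expansion of $$\frac{(x+y)^{i+j-k}}{(1-x)^{m-k+1}(1+y)^{n-k+1}}.$$ In particular (case $i+j=k$), the coordinate of $f^i\phi_m\otimes f^{k-i}\phi_n$ in $\phi_{m,n,k}$ is the coefficient of $x^{k-i}y^i$ in $\frac{1}{(1-x)^{m-k+1}(1+y)^{n-k+1}}$.
   Context: Let $e,f,h$ be the standard basis of $\mathfrak{sl}(2,\mathbb{C})$. $V(n)$ is the irreducible representation of highest weight $n$ with fixed highest weight vector $\phi_n$; $\{f^i\phi_n\}_{0\le i\le n}$ is a basis, $f^{n+1}\phi_n=0$. $\mathfrak{sl}(2)$ acts on $V(m)\otimes V(n)$ by $X(v\otimes w)=Xv\otimes w+v\otimes Xw$. For $0\le k\le\min(m,n)$, let $\phi_{m,n,k}=\sum_{l=0}^{k}(-1)^l\binom{m-l}{k-l}\binom{n-k+l}{l} f^l\phi_m\otimes f^{k-l}\phi_n$ (a highest weight vector of weight $m+n-2k$). The coordinates $c_{m,n,k}(i,j)$ are defined by $f^{p-k}\phi_{m,n,k}=\sum_{i+j=p,\,0\le i\le m,\,0\le j\le n} c_{m,n,k}(i,j)\, f^i\phi_m\otimes f^j\phi_n$ for $k\le p\le m+n-k$. *)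

theory Defs
  imports Complex_Main "HOL-Computational_Algebra.Formal_Power_Series"
begin

text \<open>Elements of V(m) \<otimes> V(n) are represented by their coordinates with respect
  to the basis f^i phi_m \<otimes> f^j phi_n (0 \<le> i \<le> m, 0 \<le> j \<le> n): a function
  u :: nat \<Rightarrow> nat \<Rightarrow> complex, where u i j is the coordinate of
  f^i phi_m \<otimes> f^j phi_n (coordinates outside the index box are 0).\<close>

definition in_box :: "nat \<Rightarrow> nat \<Rightarrow> nat \<Rightarrow> nat \<Rightarrow> bool" where
  "in_box m n i j \<longleftrightarrow> i \<le> m \<and> j \<le> n"

text \<open>Action of f on V(m) \<otimes> V(n): f(v\<otimes>w) = fv\<otimes>w + v\<otimes>fw, with
  f(f^i phi) = f^(i+1) phi and f^(n+1) phi_n = 0.  In coordinates, the coefficient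
  of f^i phi_m \<otimes> f^j phi_n in f u is u (i-1) j + u i (j-1) (terms with a
  negative index absent).\<close>

definition f_tensor :: "nat \<Rightarrow> nat \<Rightarrow> (nat \<Rightarrow> nat \<Rightarrow> complex) \<Rightarrow> (nat \<Rightarrow> nat \<Rightarrow> complex)" where
  "f_tensor m n u = (\<lambda>i j. if in_box m n i j then
      (if 0 < i then u (i - 1) j else 0) + (if 0 < j then u i (j - 1) else 0)
    else 0)"

definition phi_mnk :: "nat \<Rightarrow> nat \<Rightarrow> nat \<Rightarrow> (nat \<Rightarrow> nat \<Rightarrow> complex)" where
  "phi_mnk m n k = (\<lambda>i j. \<Sum>l\<in>{0..k}.
      if i = l \<and> j = k - l \<and> in_box m n i j
      then (-1) ^ l * of_nat ((m - l) choose (k - l)) * of_nat ((n - k + l) choose l)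
      else 0)"

definition c_coord :: "nat \<Rightarrow> nat \<Rightarrow> nat \<Rightarrow> nat \<Rightarrow> nat \<Rightarrow> complex" where
  "c_coord m n k i j = ((f_tensor m n ^^ (i + j - k)) (phi_mnk m n k)) i j"

text \<open>Bivariate formal power series in x, y over \<complex> are modelled as
  complex fps fps: the outer variable is y, the inner one is x.\<close>

definition fpsX :: "complex fps fps" where "fpsX = fps_const fps_X"
definition fpsY :: "complex fps fps" where "fpsY = fps_X"

text \<open>coefficient of x^a y^b\<close>
definition coeff_xy :: "complex fps fps \<Rightarrow> nat \<Rightarrow> nat \<Rightarrow> complex" where
  "coeff_xy F a b = fps_nth (fps_nth F b) a"

end

theory Submission imports Defs begin

text \<open>Identify a vector u of V(m) \<otimes> V(n) with the generating function
  \<Sum> u i j x^j y^i.  On a coordinate inside the index box, f acts as multiplication by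
  x + y, and the truncation at the box boundary never matters because both neighbours
  (i-1, j) and (i, j-1) of a box coordinate lie in the box again.  So f^N phi_{m,n,k}
  agrees inside the box with (x + y)^N times any series matching phi_{m,n,k} on the
  antidiagonal i + j = k.  The series 1/((1-x)^(m-k+1) (1+y)^(n-k+1)) does: its
  coefficient of x^(k-l) y^l is binom(m-l, k-l) (-1)^l binom(n-k+l, l) by the negative
  binomial expansion 1/(1 - c t)^b = \<Sum> binom(b+r-1, r) c^r t^r.\<close>

definition fps_neg_binomial :: "nat \<Rightarrow> 'a::comm_ring_1 \<Rightarrow> 'a fps" where
  "fps_neg_binomial b c = Abs_fps (\<lambda>r. of_nat ((b + r - 1) choose r) * c ^ r)"

lemma fps_neg_binomial_Suc_mult:
  "fps_neg_binomial (Suc b) c * (1 - fps_const c * fps_X) = fps_neg_binomial b c"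
proof (rule fps_ext)
  fix r
  show "fps_nth (fps_neg_binomial (Suc b) c * (1 - fps_const c * fps_X)) r
      = fps_nth (fps_neg_binomial b c) r"
  proof (cases r)
    case (Suc r')
    have "(b + r' + 1) choose (r' + 1) = ((b + r') choose r') + ((b + r') choose (r' + 1))"
      by simp
    then show ?thesis
      using Suc by (simp add: fps_neg_binomial_def algebra_simps)
  qed (simp add: fps_neg_binomial_def algebra_simps)
qed

lemma fps_neg_binomial_mult_power:
  "fps_neg_binomial b c * (1 - fps_const c * fps_X) ^ b = 1"
proof (induction b)
  case 0
  have "fps_neg_binomial 0 c = 1"
    by (rule fps_ext) (simp add: fps_neg_binomial_def binomial_eq_0)
  then show ?case by simp
next
  case (Suc b)
  have "fps_neg_binomial (Suc b) c * (1 - fps_const c * fps_X) ^ Suc b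
      = (fps_neg_binomial (Suc b) c * (1 - fps_const c * fps_X)) * (1 - fps_const c * fps_X) ^ b"
    by (simp add: algebra_simps)
  also have "\<dots> = 1"
    using Suc.IH by (simp add: fps_neg_binomial_Suc_mult)
  finally show ?case .
qed

text \<open>Coefficient rings of fps such as complex fps are no division rings, so the
  library's fps_inverse_unique does not apply.\<close>

lemma fps_inverse_eq_if_mult_eq_1:
  fixes f g :: "'a::{comm_ring_1, inverse} fps"
  assumes fg: "f * g = 1" and f0: "fps_nth f 0 * inverse (fps_nth f 0) = 1"
  shows "inverse f = g"
proof -
  have g0f0: "fps_nth g 0 * fps_nth f 0 = 1"
    using fps_mult_nth_0[of f g] fg by (simp add: mult.commute)
  have "fps_nth g 0 = fps_nth g 0 * (fps_nth f 0 * inverse (fps_nth f 0))"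
    using f0 by simp
  also have "\<dots> = inverse (fps_nth f 0)"
    using g0f0 by (simp add: mult.assoc[symmetric])
  finally have "inverse f = fps_right_inverse f (fps_nth g 0)"
    by (simp add: fps_inverse_def)
  also have "\<dots> = g"
    using fg g0f0 by (rule fps_lr_inverse_unique_ring1(2))
  finally show ?thesis .
qed

lemma inverse_one_minus_X_one_plus_Y:
  "inverse ((1 - fpsX) ^ a * (1 + fpsY) ^ b)
     = fps_const (fps_neg_binomial a (1::complex)) * fps_neg_binomial b (-1)"
proof (rule fps_inverse_eq_if_mult_eq_1)
  define P :: "complex fps" where "P = (1 - fps_X) ^ a"
  have D: "(1 - fpsX) ^ a * (1 + fpsY) ^ b
      = fps_const P * (1 - fps_const (-1) * fps_X) ^ b"
  proof -
    have X: "1 - fpsX = fps_const (1 - fps_X)"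
      by (simp add: fpsX_def flip: fps_const_sub)
    have Y: "1 + fpsY = 1 - fps_const (-1) * fps_X"
      by (metis fpsY_def fps_const_neg fps_const_1_eq_1 diff_minus_eq_add mult_minus_left mult_1)
    show ?thesis
      by (simp only: X Y P_def fps_const_power)
  qed
  have P: "fps_neg_binomial a 1 * P = 1"
    using fps_neg_binomial_mult_power[of a "1::complex"] by (simp add: P_def)
  show "(1 - fpsX) ^ a * (1 + fpsY) ^ b
      * (fps_const (fps_neg_binomial a 1) * fps_neg_binomial b (-1)) = 1"
  proof -
    have "(1 - fpsX) ^ a * (1 + fpsY) ^ b
        * (fps_const (fps_neg_binomial a 1) * fps_neg_binomial b (-1))
        = fps_const (fps_neg_binomial a 1 * P)
          * (fps_neg_binomial b (-1) * (1 - fps_const (-1) * fps_X) ^ b)"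
      by (simp only: D mult_ac flip: fps_const_mult)
    then show ?thesis
      by (simp only: P fps_neg_binomial_mult_power fps_const_1_eq_1 mult_1)
  qed
  have "fps_nth ((1 - fpsX) ^ a * (1 + fpsY) ^ b) 0 = P"
    unfolding D by (simp add: fps_nth_power_0)
  moreover have "fps_nth P 0 \<noteq> 0"
    by (simp add: P_def fps_nth_power_0)
  ultimately show "fps_nth ((1 - fpsX) ^ a * (1 + fpsY) ^ b) 0
      * inverse (fps_nth ((1 - fpsX) ^ a * (1 + fpsY) ^ b) 0) = 1"
    by (simp add: inverse_mult_eq_1')
qed

lemma coeff_xy_inverse_one_minus_X_one_plus_Y:
  "coeff_xy (inverse ((1 - fpsX) ^ a * (1 + fpsY) ^ b)) r l
     = (-1) ^ l * of_nat ((a + r - 1) choose r) * of_nat ((b + l - 1) choose l)"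
proof -
  have "(-1 :: complex fps) ^ l = fps_const ((-1) ^ l)"
    by (metis fps_const_neg fps_const_1_eq_1 fps_const_power)
  then show ?thesis
    by (simp add: inverse_one_minus_X_one_plus_Y coeff_xy_def fps_neg_binomial_def
        fps_of_nat[symmetric] mult_ac del: fps_of_nat)
qed

lemma coeff_xy_X_plus_Y_mult:
  "coeff_xy ((fpsX + fpsY) * F) j i =
     (if 0 < j then coeff_xy F (j - 1) i else 0) + (if 0 < i then coeff_xy F j (i - 1) else 0)"
proof -
  have "(fpsX + fpsY) * F = fps_const fps_X * F + fps_X * F"
    by (simp add: fpsX_def fpsY_def algebra_simps)
  then show ?thesis
    by (cases i; cases j) (simp_all add: coeff_xy_def)
qed

lemma funpow_f_tensor_eq_coeff_xy:
  assumes antidiagonal: "\<And>i j. i \<le> m \<Longrightarrow> j \<le> n \<Longrightarrow> i + j = p \<Longrightarrow> u i j = coeff_xy F j i"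
    and "i \<le> m" "j \<le> n" "i + j = p + N"
  shows "(f_tensor m n ^^ N) u i j = coeff_xy ((fpsX + fpsY) ^ N * F) j i"
  using assms(2-4)
proof (induction N arbitrary: i j)
  case 0
  then show ?case by (simp add: antidiagonal)
next
  case (Suc N)
  let ?v = "(f_tensor m n ^^ N) u"
  have "(f_tensor m n ^^ Suc N) u i j
      = (if 0 < i then ?v (i - 1) j else 0) + (if 0 < j then ?v i (j - 1) else 0)"
    using Suc.prems by (simp add: f_tensor_def in_box_def)
  also have "\<dots> = (if 0 < i then coeff_xy ((fpsX + fpsY) ^ N * F) j (i - 1) else 0)
      + (if 0 < j then coeff_xy ((fpsX + fpsY) ^ N * F) (j - 1) i else 0)"
    using Suc by auto
  also have "\<dots> = coeff_xy ((fpsX + fpsY) * ((fpsX + fpsY) ^ N * F)) j i"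
    by (simp add: coeff_xy_X_plus_Y_mult)
  finally show ?case
    by (simp add: mult.assoc)
qed

lemma phi_mnk_antidiagonal:
  assumes "k \<le> m" "k \<le> n" "i \<le> k"
  shows "phi_mnk m n k i (k - i)
    = (-1) ^ i * of_nat ((m - i) choose (k - i)) * of_nat ((n - k + i) choose i)"
proof -
  have "phi_mnk m n k i (k - i) = (\<Sum>l\<in>{0..k}. if l = i then
      (-1) ^ l * of_nat ((m - l) choose (k - l)) * of_nat ((n - k + l) choose l) else 0)"
    unfolding phi_mnk_def
    by (rule sum.cong) (use assms in \<open>auto simp: in_box_def\<close>)
  then show ?thesis
    using assms by simp
qed

lemma phi_mnk_eq_coeff_xy:
  assumes "k \<le> m" "k \<le> n" "i \<le> k"
  shows "phi_mnk m n k i (k - i) =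
    coeff_xy (inverse ((1 - fpsX) ^ (m - k + 1) * (1 + fpsY) ^ (n - k + 1))) (k - i) i"
proof -
  have "m - k + 1 + (k - i) - 1 = m - i" "n - k + 1 + i - 1 = n - k + i"
    using assms by simp_all
  then show ?thesis
    unfolding phi_mnk_antidiagonal[OF assms] coeff_xy_inverse_one_minus_X_one_plus_Y
    by (simp only:)
qed

theorem mainTheorem4:
  fixes m n k :: nat
  assumes "k \<le> m" and "k \<le> n"
  shows "(\<forall>i j. i \<le> m \<longrightarrow> j \<le> n \<longrightarrow> k \<le> i + j \<longrightarrow> i + j \<le> m + n - k \<longrightarrow>
            c_coord m n k i j =
            coeff_xy ((fpsX + fpsY) ^ (i + j - k)
                      * inverse ((1 - fpsX) ^ (m - k + 1) * (1 + fpsY) ^ (n - k + 1))) j i)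
       \<and> (\<forall>i. i \<le> k \<longrightarrow>
            phi_mnk m n k i (k - i) =
            coeff_xy (inverse ((1 - fpsX) ^ (m - k + 1) * (1 + fpsY) ^ (n - k + 1))) (k - i) i)"
proof -
  let ?R = "inverse ((1 - fpsX) ^ (m - k + 1) * (1 + fpsY) ^ (n - k + 1))"
  have antidiagonal: "phi_mnk m n k i j = coeff_xy ?R j i" if "i + j = k" for i j
  proof -
    have "i \<le> k" "j = k - i"
      using that by auto
    then show ?thesis
      using phi_mnk_eq_coeff_xy[OF assms] by (simp only:)
  qed
  have "c_coord m n k i j = coeff_xy ((fpsX + fpsY) ^ (i + j - k) * ?R) j i"
    if "i \<le> m" "j \<le> n" "k \<le> i + j" for i j
    unfolding c_coord_def
    by (rule funpow_f_tensor_eq_coeff_xy[where p = k]) (use that antidiagonal in auto)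
  then show ?thesis
    using phi_mnk_eq_coeff_xy[OF assms] by blast
qed

end
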